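(* For every $s\in\mathbb{C}$ with $\mathrm{Re}(s)>1$, $$\sum_{n\geq1}\frac{\tau(n)\Omega(n)}{n^s}=2\zeta^2(s)P_\Omega(s),\qquad\text{where } P_\Omega(s)=\sum_p\frac{\Omega(p)}{p^s-1}=\sum_p\frac{1}{p^s-1}.$$
   Context: $\tau(n)$ is the number of positive divisors of $n$, $\Omega(n)$ is the number of prime factors of $n$ counted with multiplicity, $\zeta(s)=\sum_{n\geq1}n^{-s}$ is the Riemann zeta function, and sums over $p$ run over all primes. *)

theory Defs
  imports "HOL-Analysis.Analysis" "HOL-Computational_Algebra.Primes"
begin

definition tau :: "nat \<Rightarrow> nat" where
  "tau n = card {d. d dvd n}"

definition bigOmega :: "nat \<Rightarrow> nat" where
  "bigOmega n = size (prime_factorization n)"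

definition zeta_ser :: "complex \<Rightarrow> complex" where
  "zeta_ser s = (\<Sum>n. 1 / (of_nat (Suc n)) powr s)"

definition P_Omega :: "complex \<Rightarrow> complex" where
  "P_Omega s = (\<Sum>\<^sub>\<infinity>p\<in>{p::nat. prime p}. of_nat (bigOmega p) / ((of_nat p) powr s - 1))"

end

(* Counting prime-power divisors gives Omega(n) = #{d | n. d a prime power}, so the Dirichlet
   series of Omega is zeta(s) times the series over prime powers, which the geometric series sums
   to sum_p 1/(p^s - 1). Since Omega(d) + Omega(n/d) = Omega(n) for every divisor d of n,
   tau(n) Omega(n) = sum_{d e = n} (Omega(d) + Omega(e)), whose Dirichlet series is twice zeta(s)
   times that of Omega. For Re s > 1 all series converge absolutely, which justifies multiplying
   them and regrouping the double sums along d e = n. *)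
theory Submission
  imports Defs "HOL-Number_Theory.Prime_Powers"
begin

lemma has_sum_fiberwise:
  fixes f :: "'a \<Rightarrow> 'c::{comm_monoid_add,uniform_space,uniform_topological_group_add}"
  assumes "(f has_sum S) A" and "g ` A \<subseteq> B"
    and "\<And>y. y \<in> B \<Longrightarrow> finite {x\<in>A. g x = y}"
  shows "((\<lambda>y. \<Sum>x\<in>{x\<in>A. g x = y}. f x) has_sum S) B"
proof -
  have "bij_betw (\<lambda>x. (g x, x)) A (SIGMA y:B. {x\<in>A. g x = y})"
    using assms(2) by (auto simp: bij_betw_def inj_on_def image_iff)
  then have "((\<lambda>z. f (snd z)) has_sum S) (SIGMA y:B. {x\<in>A. g x = y})"
    using assms(1) by (simp add: has_sum_reindex_bij_betw[symmetric])
  then show ?thesis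
    by (rule has_sum_Sigma') (use assms(3) in \<open>auto intro: has_sum_finiteI\<close>)
qed

lemma has_sum_product_complex:
  fixes f :: "'a \<Rightarrow> complex" and g :: "'b \<Rightarrow> complex"
  assumes f: "(f has_sum a) A" and g: "(g has_sum b) B"
  shows "((\<lambda>(x,y). f x * g y) has_sum a * b) (A \<times> B)"
proof (rule has_sum_SigmaI)
  have f_abs: "(\<lambda>x. norm (f x)) summable_on A" and g_abs: "(\<lambda>y. norm (g y)) summable_on B"
    using f g summable_on_iff_abs_summable_on_complex by (auto simp: summable_on_def)
  have "(\<lambda>z. norm ((\<lambda>(x,y). f x * g y) z)) summable_on A \<times> B"
  proof (rule Infinite_Sum.abs_summable_on_Sigma_iff[THEN iffD2], intro conjI ballI)
    show "(\<lambda>y. norm (case (x, y) of (x, y) \<Rightarrow> f x * g y)) summable_on B" for x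
      using summable_on_cmult_right[OF g_abs, of "norm (f x)"] by (simp add: norm_mult)
    show "(\<lambda>x. norm (\<Sum>\<^sub>\<infinity>y\<in>B. norm (case (x, y) of (x, y) \<Rightarrow> f x * g y))) summable_on A"
      using summable_on_cmult_left[OF f_abs, of "\<Sum>\<^sub>\<infinity>y\<in>B. norm (g y)"]
      by (simp add: norm_mult infsum_cmult_right' infsum_nonneg)
  qed
  then show "(\<lambda>(x,y). f x * g y) summable_on A \<times> B"
    using summable_on_iff_abs_summable_on_complex by blast
  show "((\<lambda>x. f x * b) has_sum a * b) A"
    using has_sum_cmult_left[OF f] .
  show "((\<lambda>y. case (x, y) of (x, y) \<Rightarrow> f x * g y) has_sum f x * b) B" for x
    using has_sum_cmult_right[OF g] by simp
qed

lemma divisor_pairs_eq_image: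
  fixes n :: nat
  assumes "n > 0"
  shows "{z \<in> {0<..} \<times> {0<..}. fst z * snd z = n} = (\<lambda>d. (d, n div d)) ` {d. d dvd n}"
  using assms by (auto simp: image_iff intro!: Nat.gr0I)

lemma has_sum_dirichlet_prod:
  fixes f g :: "nat \<Rightarrow> complex"
  assumes "(f has_sum a) {0<..}" and "(g has_sum b) {0<..}"
  shows "((\<lambda>n. \<Sum>d | d dvd n. f d * g (n div d)) has_sum a * b) {0<..}"
proof -
  have "((\<lambda>z. f (fst z) * g (snd z)) has_sum a * b) ({0<..} \<times> {0<..})"
    using has_sum_product_complex[OF assms] by (simp add: case_prod_unfold)
  then have "((\<lambda>n. \<Sum>z\<in>{z \<in> {0<..} \<times> {0<..}. fst z * snd z = n}. f (fst z) * g (snd z))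
               has_sum a * b) {0<..}"
    by (rule has_sum_fiberwise) (auto simp: divisor_pairs_eq_image)
  then show ?thesis
    by (rule has_sum_cong[THEN iffD1, rotated])
       (auto simp: divisor_pairs_eq_image sum.reindex inj_on_def)
qed

lemma powr_of_nat_mult:
  "(of_nat m * of_nat n :: complex) powr s = of_nat m powr s * of_nat n powr s"
  by (rule powr_times_real) auto

lemma of_nat_power_powr:
  "(of_nat (q ^ k) :: complex) powr s = (of_nat q powr s) ^ k"
proof (induction k)
  case (Suc k)
  then show ?case by (simp only: power_Suc of_nat_mult powr_of_nat_mult)
qed simp

lemma powr_of_nat_dvd_mult:
  assumes "d dvd n"
  shows "(of_nat d :: complex) powr s * of_nat (n div d) powr s = of_nat n powr s"
proof (cases "d = 0")
  case False
  obtain k where "n = d * k" using assms ..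
  with False show ?thesis by (simp add: powr_of_nat_mult)
qed (use assms in simp)

lemma has_sum_dirichlet_series_mult:
  fixes F G :: "nat \<Rightarrow> complex"
  assumes "((\<lambda>n. F n / of_nat n powr s) has_sum a) {0<..}"
    and "((\<lambda>n. G n / of_nat n powr s) has_sum b) {0<..}"
  shows "((\<lambda>n. (\<Sum>d | d dvd n. F d * G (n div d)) / of_nat n powr s) has_sum a * b) {0<..}"
  using has_sum_dirichlet_prod[OF assms]
proof (rule has_sum_cong[THEN iffD1, rotated])
  show "(\<Sum>d | d dvd n. F d / of_nat d powr s * (G (n div d) / of_nat (n div d) powr s))
          = (\<Sum>d | d dvd n. F d * G (n div d)) / of_nat n powr s" for n
    unfolding sum_divide_distrib by (intro sum.cong refl) (simp add: powr_of_nat_dvd_mult)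
qed

lemma norm_inverse_nat_powr: "norm (1 / (of_nat n :: complex) powr s) = real n powr (- Re s)"
  by (simp add: norm_divide norm_powr_real_powr powr_minus_divide)

lemma has_sum_zeta_ser:
  assumes "Re s > 1"
  shows "((\<lambda>n. 1 / of_nat n powr s) has_sum zeta_ser s) {0<..}"
proof -
  let ?w = "\<lambda>n. 1 / (of_nat n :: complex) powr s"
  have abs: "summable (\<lambda>n. norm (?w n))"
    using assms by (simp add: norm_inverse_nat_powr summable_real_powr_iff)
  then have "(\<lambda>n. ?w (Suc n)) sums zeta_ser s"
    unfolding zeta_ser_def
    by (intro summable_sums) (use summable_Suc_iff[of ?w] summable_norm_cancel[OF abs] in simp)
  then have "?w sums zeta_ser s"
    using sums_Suc_iff[of ?w] by simp
  then have "(?w has_sum zeta_ser s) UNIV"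
    by (rule norm_summable_imp_has_sum[OF abs])
  then show ?thesis
    by (rule has_sum_cong_neutral[THEN iffD1, rotated -1]) auto
qed

lemma has_sum_inverse_powers_powr:
  fixes q :: nat and s :: complex
  assumes "q > 1" and "Re s > 0"
  shows "((\<lambda>k. 1 / of_nat (q ^ Suc k) powr s) has_sum 1 / (of_nat q powr s - 1)) UNIV"
proof -
  define c where "c = 1 / (of_nat q :: complex) powr s"
  have "norm c < 1"
    using assms by (simp add: c_def norm_inverse_nat_powr powr_less_one)
  then have "(\<lambda>k. c ^ Suc k) sums (c * (1 / (1 - c)))"
    using sums_mult[OF geometric_sums, of c c] by simp
  moreover have "c * (1 / (1 - c)) = 1 / (of_nat q powr s - 1)"
    using \<open>norm c < 1\<close> assms by (auto simp: c_def field_simps)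
  moreover have "summable (\<lambda>k. norm (c ^ Suc k))"
    using \<open>norm c < 1\<close> summable_mult[OF summable_geometric[of "norm c"], of "norm c"]
    by (simp add: norm_mult norm_power)
  moreover have "1 / of_nat (q ^ Suc k) powr s = c ^ Suc k" for k
    unfolding c_def of_nat_power_powr by (simp only: power_one_over)
  ultimately show ?thesis
    using norm_summable_imp_has_sum by simp
qed

lemma card_primepow_factors:
  fixes n :: nat
  assumes "n \<noteq> 0"
  shows "card (primepow_factors n) = bigOmega n"
  using sum_prime_factorization_conv_sum_primepow_factors[OF assms, of "\<lambda>_. 1 :: nat"]
  by (simp add: bigOmega_def)

lemma bigOmega_divisor_add:
  fixes d n :: nat
  assumes "d dvd n" and "n \<noteq> 0"
  shows "bigOmega d + bigOmega (n div d) = bigOmega n"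
proof -
  obtain k where "n = d * k" using assms(1) ..
  with assms(2) show ?thesis by (simp add: bigOmega_def prime_factorization_mult)
qed

lemma P_Omega_altdef: "P_Omega s = (\<Sum>\<^sub>\<infinity>p\<in>{p::nat. prime p}. 1 / (of_nat p powr s - 1))"
  unfolding P_Omega_def by (intro infsum_cong) (simp add: bigOmega_def prime_factorization_prime)

lemma has_sum_primepow_P_Omega:
  assumes "Re s > 1"
  shows "((\<lambda>n. of_bool (primepow n) / of_nat n powr s) has_sum P_Omega s) {0<..}"
proof -
  let ?w = "\<lambda>n. 1 / (of_nat n :: complex) powr s" and ?pp = "\<lambda>(p, k). p ^ Suc k"
  have "?w summable_on Collect primepow"
    using has_sum_zeta_ser[OF assms]
    by (rule summable_on_subset_banach[OF has_sum_imp_summable]) (auto intro: primepow_gt_0_nat)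
  then have "(\<lambda>x. ?w (?pp x)) summable_on Collect prime \<times> UNIV"
    by (rule summable_on_reindex_bij_betw[OF bij_betw_primepows, THEN iffD2])
  then have sum_pk: "((\<lambda>x. ?w (?pp x)) has_sum (\<Sum>\<^sub>\<infinity>x\<in>Collect prime \<times> UNIV. ?w (?pp x)))
                      (Collect prime \<times> UNIV)"
    by (rule has_sum_infsum)
  have geom: "((\<lambda>k. ?w (?pp (p, k))) has_sum 1 / (of_nat p powr s - 1)) UNIV" if "prime p" for p
    unfolding prod.case using that assms by (intro has_sum_inverse_powers_powr prime_gt_1_nat) auto
  have "((\<lambda>p. 1 / (of_nat p powr s - 1)) has_sum
          (\<Sum>\<^sub>\<infinity>x\<in>Collect prime \<times> UNIV. ?w (?pp x))) (Collect prime)"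
    using sum_pk by (rule has_sum_Sigma') (use geom in blast)
  then have "(\<Sum>\<^sub>\<infinity>x\<in>Collect prime \<times> UNIV. ?w (?pp x)) = P_Omega s"
    unfolding P_Omega_altdef by (simp add: infsumI)
  with sum_pk have "((\<lambda>x. ?w (?pp x)) has_sum P_Omega s) (Collect prime \<times> UNIV)"
    by (simp only:)
  then have "(?w has_sum P_Omega s) (Collect primepow)"
    by (rule has_sum_reindex_bij_betw[OF bij_betw_primepows, THEN iffD1])
  then show ?thesis
    by (rule has_sum_cong_neutral[THEN iffD1, rotated -1]) (auto intro: primepow_gt_0_nat)
qed

lemma has_sum_bigOmega:
  assumes "Re s > 1"
  shows "((\<lambda>n. of_nat (bigOmega n) / of_nat n powr s) has_sum P_Omega s * zeta_ser s) {0<..}"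
  using has_sum_dirichlet_series_mult[OF has_sum_primepow_P_Omega[OF assms] has_sum_zeta_ser[OF assms]]
proof (rule has_sum_cong[THEN iffD1, rotated])
  fix n :: nat
  assume "n \<in> {0<..}"
  then have "(\<Sum>d | d dvd n. of_bool (primepow d) * 1 :: complex) = of_nat (bigOmega n)"
    by (simp add: card_primepow_factors[symmetric] primepow_factors_def of_bool_def
        sum.If_cases Collect_conj_eq Int_commute)
  then show "(\<Sum>d | d dvd n. of_bool (primepow d) * 1) / of_nat n powr s
               = of_nat (bigOmega n) / of_nat n powr s"
    by simp
qed

lemma has_sum_tau_bigOmega:
  assumes "Re s > 1"
  shows "((\<lambda>n. of_nat (tau n * bigOmega n) / of_nat n powr s)
           has_sum 2 * (zeta_ser s)\<^sup>2 * P_Omega s) {0<..}"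
proof -
  let ?O = "\<lambda>n. of_nat (bigOmega n) :: complex"
  have "((\<lambda>n. (\<Sum>d | d dvd n. ?O d * 1) / of_nat n powr s
                 + (\<Sum>d | d dvd n. 1 * ?O (n div d)) / of_nat n powr s)
          has_sum P_Omega s * zeta_ser s * zeta_ser s + zeta_ser s * (P_Omega s * zeta_ser s)) {0<..}"
    using assms by (intro has_sum_add has_sum_dirichlet_series_mult has_sum_bigOmega has_sum_zeta_ser)
  also have "P_Omega s * zeta_ser s * zeta_ser s + zeta_ser s * (P_Omega s * zeta_ser s)
               = 2 * (zeta_ser s)\<^sup>2 * P_Omega s"
    by (simp add: power2_eq_square)
  finally show ?thesis
  proof (rule has_sum_cong[THEN iffD1, rotated])
    fix n :: nat
    assume "n \<in> {0<..}"
    then have "(\<Sum>d | d dvd n. ?O d * 1) + (\<Sum>d | d dvd n. 1 * ?O (n div d))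
                 = (\<Sum>d | d dvd n. ?O n)"
      by (simp add: sum.distrib[symmetric] bigOmega_divisor_add flip: of_nat_add)
    then show "(\<Sum>d | d dvd n. ?O d * 1) / of_nat n powr s
                 + (\<Sum>d | d dvd n. 1 * ?O (n div d)) / of_nat n powr s
               = of_nat (tau n * bigOmega n) / of_nat n powr s"
      by (simp add: tau_def flip: add_divide_distrib)
  qed
qed

theorem theorem4p1:
  fixes s :: complex
  assumes "Re s > 1"
  shows "(\<lambda>n. of_nat (tau (Suc n) * bigOmega (Suc n)) / (of_nat (Suc n)) powr s)
           sums (2 * (zeta_ser s)\<^sup>2 * P_Omega s)
         \<and> P_Omega s = (\<Sum>\<^sub>\<infinity>p\<in>{p::nat. prime p}. 1 / ((of_nat p) powr s - 1))"
proof
  have "bij_betw Suc UNIV {0<..}"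
    by (rule bij_betwI[where g = "\<lambda>n. n - 1"]) auto
  then have "((\<lambda>n. of_nat (tau (Suc n) * bigOmega (Suc n)) / (of_nat (Suc n)) powr s)
               has_sum 2 * (zeta_ser s)\<^sup>2 * P_Omega s) UNIV"
    using has_sum_tau_bigOmega[OF assms]
      has_sum_reindex_bij_betw[of Suc UNIV "{0<..}" "\<lambda>n. of_nat (tau n * bigOmega n) / of_nat n powr s"]
    by simp
  then show "(\<lambda>n. of_nat (tau (Suc n) * bigOmega (Suc n)) / (of_nat (Suc n)) powr s)
               sums (2 * (zeta_ser s)\<^sup>2 * P_Omega s)"
    by (rule has_sum_imp_sums)
qed (rule P_Omega_altdef)

end
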